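(* Let $(C,S)$ be a right-angled Coxeter system and $\rho\colon C\to\mathrm{SL}^{\pm}(|S|,\mathbb{R})$ a simplicial representation with fully nondegenerate Cartan matrix. For $T\subset S$ let $V_T=\mathrm{span}\{v_s:s\in T\}$ and $V_T^\perp=\bigcap_{s\in T}\ker(\alpha_s)$. Then $V=V_T\oplus V_T^\perp$ is a $C(T)$-invariant decomposition, and the representation $\rho_T\colon C(T)\to\mathrm{SL}^{\pm}(V_T)$ given by the restriction of $\rho|_{C(T)}$ to $V_T$ is isomorphic to a simplicial representation of $(C(T),T)$.
   Context: $S=\{s_1,\dots,s_n\}$, $V=\mathbb{R}^n$, $C(T)=\langle T\rangle$. A Cartan matrix is a real $n\times n$ matrix $A$ with $A_{ii}=2$; $A_{ij}=0$ if $s_i,s_j$ commute ($i\ne j$); $A_{ij}<0$ and $A_{ij}A_{ji}\ge4$ otherwise. With $\alpha_{s_i}=e^i$ (dual basis) and $v_{s_i}=\sum_kA_{ki}e_k$, the simplicial representation is $\rho(s_i)=\mathrm{id}-v_{s_i}\otimes\alpha_{s_i}$. A simplicial representation of $(C(T),T)$ is defined in the same way from a Cartan matrix of $(C(T),T)$. $A$ is fully nondegenerate if all its principal minors are nonzero. *)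

theory Defs
  imports "HOL-Analysis.Analysis"
begin

text \<open>Generators s_i are indexed by the finite type 'n (so n = CARD('n)); V = real^'n,
  alpha_{s_i}(x) = x$i.  A right-angled Coxeter system is given by a symmetric relation
  comm: for i \<noteq> j, s_i and s_j commute iff comm i j (otherwise m_ij = infinity).\<close>

definition right_angled :: "('n \<Rightarrow> 'n \<Rightarrow> bool) \<Rightarrow> bool" where
  "right_angled comm \<longleftrightarrow> (\<forall>i j. comm i j = comm j i)"

definition cartan_on :: "('n \<Rightarrow> 'n \<Rightarrow> bool) \<Rightarrow> 'n set \<Rightarrow> real^'n^'n \<Rightarrow> bool" where
  "cartan_on comm T A \<longleftrightarrow>
     (\<forall>i\<in>T. A$i$i = 2) \<and>
     (\<forall>i\<in>T. \<forall>j\<in>T. i \<noteq> j \<longrightarrow>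
        (comm i j \<longrightarrow> A$i$j = 0) \<and>
        (\<not> comm i j \<longrightarrow> A$i$j < 0 \<and> A$i$j * A$j$i \<ge> 4))"

definition principal_minor :: "real^'n^'n \<Rightarrow> 'n set \<Rightarrow> real" where
  "principal_minor A I =
     (\<Sum>p\<in>{p. p permutes I}. of_int (sign p) * (\<Prod>i\<in>I. A$i$(p i)))"

definition fully_nondegenerate :: "real^'n^'n \<Rightarrow> bool" where
  "fully_nondegenerate A \<longleftrightarrow> (\<forall>I. I \<noteq> {} \<longrightarrow> principal_minor A I \<noteq> 0)"

definition vvec :: "real^'n^'n \<Rightarrow> 'n \<Rightarrow> real^'n" where
  "vvec A i = (\<chi> k. A$k$i)"

definition rho :: "real^'n^'n \<Rightarrow> 'n \<Rightarrow> real^'n \<Rightarrow> real^'n" where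
  "rho A i x = x - (x$i) *\<^sub>R vvec A i"

definition word_act :: "real^'n^'n \<Rightarrow> 'n list \<Rightarrow> real^'n \<Rightarrow> real^'n" where
  "word_act A ws = foldr (\<lambda>i f. rho A i \<circ> f) ws id"

text \<open>R^T is modelled as the subspace of real^'n of vectors supported on T;
  the simplicial representation of (C(T),T) with Cartan matrix B (entries on T\<times>T).\<close>
definition coordT :: "'n set \<Rightarrow> (real^'n) set" where
  "coordT T = {y. \<forall>k. k \<notin> T \<longrightarrow> y$k = 0}"

definition vvecT :: "'n set \<Rightarrow> real^'n^'n \<Rightarrow> 'n \<Rightarrow> real^'n" where
  "vvecT T B i = (\<chi> k. if k \<in> T then B$k$i else 0)"

definition rhoT :: "'n set \<Rightarrow> real^'n^'n \<Rightarrow> 'n \<Rightarrow> real^'n \<Rightarrow> real^'n" where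
  "rhoT T B i y = y - (y$i) *\<^sub>R vvecT T B i"

definition word_actT :: "'n set \<Rightarrow> real^'n^'n \<Rightarrow> 'n list \<Rightarrow> real^'n \<Rightarrow> real^'n" where
  "word_actT T B ws = foldr (\<lambda>i f. rhoT T B i \<circ> f) ws id"

definition V_T :: "real^'n^'n \<Rightarrow> 'n set \<Rightarrow> (real^'n) set" where
  "V_T A T = span (vvec A ` T)"

definition V_T_perp :: "'n set \<Rightarrow> (real^'n) set" where
  "V_T_perp T = {x. \<forall>i\<in>T. x$i = 0}"

end

theory Submission
  imports Defs
begin

text \<open>Every vector of \<open>V_T\<close> is \<open>A c\<close> with \<open>c\<close> supported on \<open>T\<close>, and the \<open>T\<close>-coordinates of
  \<open>A c\<close> are those of \<open>A\<^sub>T c\<close>, where \<open>A\<^sub>T\<close> is the principal \<open>T \<times> T\<close> submatrix. Full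
  nondegeneracy makes \<open>A\<^sub>T\<close> invertible, so restriction to the \<open>T\<close>-coordinates is an
  isomorphism from \<open>V_T\<close> onto \<open>\<real>\<^sup>T\<close>; its kernel is \<open>V_T\<^sup>\<bottom>\<close>, which gives the decomposition.
  Under this isomorphism \<open>v\<^sub>s\<close> (\<open>s \<in> T\<close>) becomes the column of \<open>A\<^sub>T\<close> indexed by \<open>s\<close>, so \<open>\<rho>\<^sub>T\<close>
  is the simplicial representation with Cartan matrix \<open>A\<^sub>T\<close>.\<close>

definition principal_block :: "real^'n^'n \<Rightarrow> 'n set \<Rightarrow> real^'n^'n" where
  "principal_block A T =
     (\<chi> i j. if i \<in> T then (if j \<in> T then A$i$j else 0) else (if i = j then 1 else 0))"

lemma det_principal_block:
  fixes A :: "real^'n::finite^'n"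
  shows "det (principal_block A T) = principal_minor A T"
proof -
  let ?M = "principal_block A T"
  have moves_outside: "(\<Prod>i\<in>UNIV. ?M $ i $ p i) = 0"
    if "p permutes UNIV" "\<not> p permutes T" for p
  proof -
    from that obtain x where "x \<notin> T" "p x \<noteq> x" unfolding permutes_def by auto
    then have "?M $ x $ p x = 0" by (simp add: principal_block_def)
    then show ?thesis by (meson UNIV_I finite prod_zero)
  qed
  have permutes_T: "(\<Prod>i\<in>UNIV. ?M $ i $ p i) = (\<Prod>i\<in>T. A $ i $ p i)" if "p permutes T" for p
  proof -
    have "(\<Prod>i\<in>UNIV. ?M $ i $ p i) = (\<Prod>i\<in>T. ?M $ i $ p i)"
      by (rule prod.mono_neutral_right)
        (use that in \<open>auto simp: principal_block_def permutes_not_in\<close>)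
    also have "\<dots> = (\<Prod>i\<in>T. A $ i $ p i)"
      by (rule prod.cong) (use that in \<open>auto simp: principal_block_def permutes_in_image\<close>)
    finally show ?thesis .
  qed
  have "det ?M = (\<Sum>p\<in>{p. p permutes T}. of_int (sign p) * (\<Prod>i\<in>UNIV. ?M $ i $ p i))"
    unfolding det_def
    by (rule sum.mono_neutral_right)
      (auto simp: finite_permutations moves_outside intro: permutes_subset)
  also have "\<dots> = principal_minor A T"
    unfolding principal_minor_def by (rule sum.cong) (auto simp: permutes_T)
  finally show ?thesis .
qed

lemma principal_minor_empty: "principal_minor A {} = 1"
  unfolding principal_minor_def by simp

lemma fully_nondegenerate_principal_minor_nonzero:
  "fully_nondegenerate A \<Longrightarrow> principal_minor A T \<noteq> 0"
  unfolding fully_nondegenerate_def by (cases "T = {}") (auto simp: principal_minor_empty)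

definition coord_proj :: "'n set \<Rightarrow> real^'n \<Rightarrow> real^'n" where
  "coord_proj T x = (\<chi> k. if k \<in> T then x$k else 0)"

lemma linear_coord_proj: "linear (coord_proj T)"
  by (rule linearI) (auto simp: vec_eq_iff coord_proj_def)

lemma coord_proj_eq_0_iff: "coord_proj T x = 0 \<longleftrightarrow> x \<in> V_T_perp T"
  by (auto simp: coord_proj_def vec_eq_iff V_T_perp_def)

lemma coord_proj_in_coordT: "coord_proj T x \<in> coordT T"
  by (simp add: coord_proj_def coordT_def)

lemma subspace_coordT: "subspace (coordT T)"
  by (auto simp: subspace_def coordT_def)

lemma sum_axis_coordT:
  fixes y :: "real^'n::finite"
  assumes "y \<in> coordT T"
  shows "(\<Sum>j\<in>T. y$j *\<^sub>R axis j 1) = y"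
proof -
  have "(\<Sum>j\<in>T. y$j *\<^sub>R axis j 1) $ i = y $ i" for i
    using assms
    by (cases "i \<in> T")
      (simp_all add: coordT_def axis_def if_distrib[of "\<lambda>a. _ * a"] cong: if_cong)
  then show ?thesis by (simp add: vec_eq_iff)
qed

lemma span_axis_eq_coordT:
  fixes T :: "'n::finite set"
  shows "span ((\<lambda>j. axis j 1) ` T) = (coordT T :: (real^'n) set)"
proof
  show "span ((\<lambda>j. axis j 1) ` T) \<subseteq> coordT T"
    by (rule span_minimal[OF _ subspace_coordT]) (auto simp: coordT_def axis_def)
next
  show "coordT T \<subseteq> span ((\<lambda>j. axis j 1) ` T)"
  proof
    fix y :: "real^'n" assume "y \<in> coordT T"
    then have "y = (\<Sum>j\<in>T. y$j *\<^sub>R axis j 1)"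
      by (rule sum_axis_coordT[symmetric])
    also have "\<dots> \<in> span ((\<lambda>j. axis j 1) ` T)"
      by (intro span_sum span_mul span_base imageI)
    finally show "y \<in> span ((\<lambda>j. axis j 1) ` T)" .
  qed
qed

lemma V_T_eq_image_coordT: "V_T A T = (\<lambda>y. A *v y) ` coordT T"
proof -
  have "vvec A j = A *v axis j 1" for j
    by (simp add: vvec_def matrix_vector_mult_basis column_def)
  then have "vvec A ` T = (\<lambda>y. A *v y) ` (\<lambda>j. axis j 1) ` T"
    by (simp add: image_image)
  then show ?thesis
    unfolding V_T_def
    by (simp add: span_linear_image[OF matrix_vector_mul_linear] span_axis_eq_coordT)
qed

lemma coord_proj_mult_coordT:
  assumes "y \<in> coordT T"
  shows "coord_proj T (A *v y) = principal_block A T *v y"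
proof -
  have "(\<Sum>j\<in>UNIV. A$i$j * y$j) = (\<Sum>j\<in>UNIV. (if j \<in> T then A$i$j else 0) * y$j)" for i
    using assms by (intro sum.cong) (auto simp: coordT_def)
  moreover have "(\<Sum>j\<in>UNIV. (if i = j then 1 else 0) * y$j) = y$i" for i
    by (simp add: mult_if_delta)
  ultimately show ?thesis
    using assms
    by (auto simp: vec_eq_iff coord_proj_def principal_block_def matrix_vector_mult_def coordT_def)
qed

lemma principal_block_mult_coordT_iff:
  "principal_block A T *v y \<in> coordT T \<longleftrightarrow> y \<in> coordT T"
proof -
  have "(principal_block A T *v y) $ k = y $ k" if "k \<notin> T" for k
    using that by (simp add: principal_block_def matrix_vector_mult_def mult_if_delta)
  then show ?thesis by (auto simp: coordT_def)
qed

lemma bij_betw_coord_proj_V_T: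
  assumes "principal_minor A T \<noteq> 0"
  shows "bij_betw (coord_proj T) (V_T A T) (coordT T)"
proof -
  let ?M = "principal_block A T"
  have invertible: "invertible ?M"
    using assms by (simp add: invertible_det_nz det_principal_block)
  then have inj_M: "inj (\<lambda>y. ?M *v y)"
    by (rule inj_matrix_vector_mult)
  from invertible have surj_M: "surj (\<lambda>y. ?M *v y)"
    by (simp add: invertible_right_inverse matrix_right_invertible_surjective)
  have "inj_on (coord_proj T) (V_T A T)"
  proof (rule inj_onI)
    fix x x' assume "x \<in> V_T A T" "x' \<in> V_T A T" and eq: "coord_proj T x = coord_proj T x'"
    then obtain y y' where y: "y \<in> coordT T" "x = A *v y" and y': "y' \<in> coordT T" "x' = A *v y'"
      by (auto simp: V_T_eq_image_coordT)
    with eq have "?M *v y = ?M *v y'"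
      by (simp add: coord_proj_mult_coordT)
    with inj_M have "y = y'" by (simp add: inj_eq)
    with y y' show "x = x'" by simp
  qed
  moreover have "coord_proj T ` V_T A T = coordT T"
  proof
    show "coord_proj T ` V_T A T \<subseteq> coordT T"
      using coord_proj_in_coordT by blast
  next
    show "coordT T \<subseteq> coord_proj T ` V_T A T"
    proof
      fix z assume z: "z \<in> coordT T"
      obtain y where y: "z = ?M *v y" using surjD[OF surj_M] by blast
      with z have "y \<in> coordT T" by (simp add: principal_block_mult_coordT_iff)
      with y have "z = coord_proj T (A *v y)" "A *v y \<in> V_T A T"
        by (simp_all add: coord_proj_mult_coordT V_T_eq_image_coordT)
      then show "z \<in> coord_proj T ` V_T A T" by (rule image_eqI)
    qed
  qed
  ultimately show ?thesis by (simp add: bij_betw_def)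
qed

lemma V_T_inter_perp:
  assumes "principal_minor A T \<noteq> 0"
  shows "V_T A T \<inter> V_T_perp T = {0}"
proof -
  have inj: "inj_on (coord_proj T) (V_T A T)"
    using bij_betw_coord_proj_V_T[OF assms] by (rule bij_betw_imp_inj_on)
  have zero: "0 \<in> V_T A T" "0 \<in> V_T_perp T"
    by (simp_all add: V_T_def span_zero V_T_perp_def)
  have "x = 0" if "x \<in> V_T A T" "x \<in> V_T_perp T" for x
  proof (rule inj_onD[OF inj _ that(1) zero(1)])
    have "coord_proj T x = 0" "coord_proj T 0 = 0"
      using that(2) zero(2) by (simp_all only: coord_proj_eq_0_iff)
    then show "coord_proj T x = coord_proj T 0" by simp
  qed
  with zero show ?thesis by blast
qed

lemma V_T_plus_perp:
  assumes "principal_minor A T \<noteq> 0"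
  shows "\<exists>u\<in>V_T A T. \<exists>w\<in>V_T_perp T. x = u + w"
proof -
  have "coord_proj T x \<in> coord_proj T ` V_T A T"
    using bij_betw_imp_surj_on[OF bij_betw_coord_proj_V_T[OF assms]] coord_proj_in_coordT
    by simp
  then obtain u where u: "u \<in> V_T A T" "coord_proj T x = coord_proj T u"
    by (rule imageE)
  then have "x - u \<in> V_T_perp T"
    by (simp add: linear_diff[OF linear_coord_proj] flip: coord_proj_eq_0_iff)
  moreover have "x = u + (x - u)" by simp
  ultimately show ?thesis using u(1) by blast
qed

lemma word_act_Nil [simp]: "word_act A [] x = x"
  by (simp add: word_act_def)

lemma word_act_Cons [simp]: "word_act A (i # ws) x = rho A i (word_act A ws x)"
  by (simp add: word_act_def)

lemma word_actT_Nil [simp]: "word_actT T B [] x = x"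
  by (simp add: word_actT_def)

lemma word_actT_Cons [simp]: "word_actT T B (i # ws) x = rhoT T B i (word_actT T B ws x)"
  by (simp add: word_actT_def)

lemma word_act_V_T: "set ws \<subseteq> T \<Longrightarrow> x \<in> V_T A T \<Longrightarrow> word_act A ws x \<in> V_T A T"
proof (induction ws)
  case Nil
  then show ?case by simp
next
  case (Cons i ws)
  then have "word_act A ws x \<in> V_T A T" "vvec A i \<in> V_T A T"
    by (auto simp: V_T_def intro: span_base)
  then show ?case
    unfolding word_act_Cons rho_def V_T_def by (intro span_diff span_mul)
qed

lemma word_act_V_T_perp: "set ws \<subseteq> T \<Longrightarrow> x \<in> V_T_perp T \<Longrightarrow> word_act A ws x \<in> V_T_perp T"
  by (induction ws) (auto simp: rho_def V_T_perp_def)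

lemma coord_proj_rho: "i \<in> T \<Longrightarrow> coord_proj T (rho A i x) = rhoT T A i (coord_proj T x)"
  by (simp add: vec_eq_iff coord_proj_def rho_def rhoT_def vvec_def vvecT_def)

lemma coord_proj_word_act:
  "set ws \<subseteq> T \<Longrightarrow> coord_proj T (word_act A ws x) = word_actT T A ws (coord_proj T x)"
  by (induction ws) (auto simp: coord_proj_rho)

lemma cartan_on_subset: "cartan_on comm U A \<Longrightarrow> T \<subseteq> U \<Longrightarrow> cartan_on comm T A"
  unfolding cartan_on_def by (simp add: subset_iff)

theorem lemma4p8:
  fixes comm :: "'n::finite \<Rightarrow> 'n \<Rightarrow> bool" and A :: "real^'n^'n" and T :: "'n set"
  assumes "right_angled comm"
    and "cartan_on comm UNIV A"
    and "fully_nondegenerate A"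
  shows "V_T A T \<inter> V_T_perp T = {0}
    \<and> (\<forall>x. \<exists>u\<in>V_T A T. \<exists>w\<in>V_T_perp T. x = u + w)
    \<and> (\<forall>ws. set ws \<subseteq> T \<longrightarrow>
          word_act A ws ` V_T A T \<subseteq> V_T A T \<and> word_act A ws ` V_T_perp T \<subseteq> V_T_perp T)
    \<and> (\<exists>B \<phi>. cartan_on comm T B \<and> linear \<phi> \<and> inj_on \<phi> (V_T A T)
          \<and> \<phi> ` V_T A T = coordT T
          \<and> (\<forall>ws. set ws \<subseteq> T \<longrightarrow>
               (\<forall>x\<in>V_T A T. \<phi> (word_act A ws x) = word_actT T B ws (\<phi> x))))"
proof -
  have minor: "principal_minor A T \<noteq> 0"
    using assms(3) by (rule fully_nondegenerate_principal_minor_nonzero)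
  have cartan: "cartan_on comm T A"
    using assms(2) by (rule cartan_on_subset) simp
  have bij: "bij_betw (coord_proj T) (V_T A T) (coordT T)"
    using minor by (rule bij_betw_coord_proj_V_T)
  show ?thesis
  proof (intro conjI allI impI exI[of _ A] exI[of _ "coord_proj T"])
    show "V_T A T \<inter> V_T_perp T = {0}"
      using minor by (rule V_T_inter_perp)
    show "\<exists>u\<in>V_T A T. \<exists>w\<in>V_T_perp T. x = u + w" for x
      using minor by (rule V_T_plus_perp)
    show "word_act A ws ` V_T A T \<subseteq> V_T A T" "word_act A ws ` V_T_perp T \<subseteq> V_T_perp T"
      if "set ws \<subseteq> T" for ws
      using that word_act_V_T word_act_V_T_perp by blast+
    show "inj_on (coord_proj T) (V_T A T)" "coord_proj T ` V_T A T = coordT T"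
      using bij by (simp_all add: bij_betw_def)
    show "\<forall>x\<in>V_T A T. coord_proj T (word_act A ws x) = word_actT T A ws (coord_proj T x)"
      if "set ws \<subseteq> T" for ws
      using that by (simp add: coord_proj_word_act)
  qed (fact cartan linear_coord_proj)+
qed

end
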